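(* Let $0<\beta<1$ and $A>0$. For every $p>0$ and every nonnegative $w\in W^{1,1}[-p,p]$ with $w(-p)=w(p)=0$ and $\int_{-p}^p w\,dx=A$, setting $L=\int_{-p}^p\sqrt{1+w'^2}\,dx$, we have $$L-2\beta p\ \ge\ 2\sqrt{A\big(\arccos\beta-\beta\sqrt{1-\beta^2}\big)},$$ with equality if and only if $$p=p_0:=\sqrt{\frac{(1-\beta^2)A}{\arccos\beta-\beta\sqrt{1-\beta^2}}}\quad\text{and}\quad w(x)=\sqrt{R^2-x^2}-\beta R,\ \ R=\frac{p_0}{\sqrt{1-\beta^2}}=\sqrt{\frac{A}{\arccos\beta-\beta\sqrt{1-\beta^2}}}.$$
   Context: $W^{1,1}[-p,p]$ denotes the Sobolev space of integrable functions on $[-p,p]$ with integrable weak derivative (absolutely continuous functions). *)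

theory Defs
  imports "HOL-Analysis.Analysis"
begin

text \<open>Membership in W^{1,1}[-p,p] with (weak) derivative g: w is absolutely
continuous on [-p,p], i.e. w is the indefinite integral of an integrable g.
Such g is the weak derivative of w (unique up to null sets).\<close>
definition W11_with_deriv :: "(real \<Rightarrow> real) \<Rightarrow> (real \<Rightarrow> real) \<Rightarrow> real \<Rightarrow> bool" where
  "W11_with_deriv w g p \<longleftrightarrow>
     g absolutely_integrable_on {-p..p} \<and>
     (\<forall>x\<in>{-p..p}. w x = w (-p) + integral {-p..x} g)"

end

theory Submission
  imports Defs
begin

(* Calibration by a circular arc. For a circle of radius r > p with upper arc S x = sqrt (r^2 - x^2),
   Cauchy-Schwarz against its unit normal (S x, -x) / r gives sqrt (1 + w'^2) >= (S x - x w') / r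
   pointwise, with equality exactly where w' = S'. Integrating, with int x w' = -A (integration by
   parts for absolutely continuous w, via Fubini) and the area of the circular segment under S, gives
   L >= (A + p S p + r^2 arcsin (p / r)) / r, with equality iff w = S - S p. Choosing
   r = p / sqrt (1 - beta^2), the arc meets the axis at angle arccos beta and the bound becomes
   L - 2 beta p >= A / r + c r >= 2 sqrt (A c), the last step being AM-GM, tight iff r = sqrt (A / c). *)

lemma absolutely_integrable_continuous_mult:
  fixes f g :: "real \<Rightarrow> real"
  assumes "continuous_on {a..b} g" and "f absolutely_integrable_on {a..b}"
  shows "(\<lambda>x. g x * f x) absolutely_integrable_on {a..b}"
proof (rule absolutely_integrable_bounded_measurable_product_real)
  show "g \<in> borel_measurable (lebesgue_on {a..b})"
    using assms(1) by (rule continuous_imp_measurable_on_sets_lebesgue) simp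
  show "bounded (g ` {a..b})"
    using assms(1) by (intro compact_imp_bounded compact_continuous_image) simp_all
qed (use assms(2) in simp_all)

lemma measure_lebesgue_on_atLeastAtMost:
  fixes a b x :: real
  assumes "x \<in> {a..b}"
  shows "measure (lebesgue_on {a..b}) {x..b} = b - x"
  using assms by (simp add: measure_restrict_space)

lemma integrable_triangle_kernel:
  fixes f :: "real \<Rightarrow> real"
  assumes f: "f absolutely_integrable_on {a..b}"
  shows "integrable (lebesgue_on {a..b} \<Otimes>\<^sub>M lebesgue_on {a..b}) (\<lambda>(x, t). f x * indicator {x..} t)"
proof -
  let ?M = "lebesgue_on {a..b}"
  interpret M: finite_measure ?M by (rule finite_measure_lebesgue_on) simp
  interpret MM: pair_sigma_finite ?M ?M
    by (intro pair_sigma_finite.intro M.sigma_finite_measure_axioms)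
  have [measurable]: "f \<in> borel_measurable ?M"
    using f by (rule absolutely_integrable_imp_borel_measurable) simp
  have [measurable]: "(\<lambda>x. x) \<in> borel_measurable ?M"
    by (intro continuous_imp_measurable_on_sets_lebesgue continuous_intros) simp
  show ?thesis
  proof (rule MM.Fubini_integrable)
    show "(\<lambda>(x, t). f x * indicator {x..} t) \<in> borel_measurable (?M \<Otimes>\<^sub>M ?M)"
      unfolding indicator_def atLeast_iff by measurable
    have "(\<lambda>x. (b - x) * \<bar>f x\<bar>) absolutely_integrable_on {a..b}"
      using absolutely_integrable_norm[OF f]
      by (intro absolutely_integrable_continuous_mult continuous_intros) (simp add: o_def)
    then have "integrable ?M (\<lambda>x. (b - x) * \<bar>f x\<bar>)"
      by (rule absolutely_integrable_imp_integrable) simp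
    then show "integrable ?M (\<lambda>x. LINT t|?M. norm (case (x, t) of (x, t) \<Rightarrow> f x * indicator {x..} t))"
      by (rule Bochner_Integration.integrable_cong[THEN iffD1, rotated -1])
        (simp_all add: abs_mult measure_lebesgue_on_atLeastAtMost)
    show "AE x in ?M. integrable ?M (\<lambda>t. case (x, t) of (x, t) \<Rightarrow> f x * indicator {x..} t)"
    proof (rule AE_I2)
      fix x
      have "(\<lambda>t. f x * indicator {x..} t) \<in> borel_measurable ?M"
        unfolding indicator_def atLeast_iff by measurable
      then show "integrable ?M (\<lambda>t. case (x, t) of (x, t) \<Rightarrow> f x * indicator {x..} t)"
        by (intro M.integrable_const_bound[where B = "\<bar>f x\<bar>"]) (auto simp: abs_mult indicator_def)
    qed
  qed
qed

lemma integral_indefinite_integral: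
  fixes f :: "real \<Rightarrow> real"
  assumes f: "f absolutely_integrable_on {a..b}"
  shows "integral {a..b} (\<lambda>t. integral {a..t} f) = integral {a..b} (\<lambda>x. (b - x) * f x)"
proof -
  let ?M = "lebesgue_on {a..b}"
  interpret M: finite_measure ?M by (rule finite_measure_lebesgue_on) simp
  interpret MM: pair_sigma_finite ?M ?M
    by (intro pair_sigma_finite.intro M.sigma_finite_measure_axioms)
  have f_int: "integrable ?M f"
    using f by (rule absolutely_integrable_imp_integrable) simp
  have inner: "(LINT x|?M. f x * indicator {x..} t) = integral {a..t} f" if "t \<in> {a..b}" for t
  proof -
    have "(LINT x|?M. f x * indicator {x..} t) = (LINT x|?M. f x * indicator {a..t} x)"
      using that by (intro Bochner_Integration.integral_cong) (auto simp: indicator_def)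
    also have "\<dots> = integral {a..b} (\<lambda>x. f x * indicator {a..t} x)"
      using that by (intro lebesgue_integral_eq_integral integrable_real_mult_indicator f_int)
        (auto simp: sets_restrict_space_iff)
    also have "\<dots> = integral {a..t} f"
      using integral_restrict_Int[of "{a..b}" "{a..t}" f] that
      by (simp add: indicator_times_eq_if min_absorb1)
    finally show ?thesis .
  qed
  have "continuous_on {a..b} (\<lambda>t. integral {a..t} f)"
    using f by (intro indefinite_integral_continuous_1 set_lebesgue_integral_eq_integral(1))
  then have "integral {a..b} (\<lambda>t. integral {a..t} f) = (LINT t|?M. integral {a..t} f)"
    by (intro lebesgue_integral_eq_integral[symmetric] continuous_imp_integrable_real) auto
  also have "\<dots> = (LINT t|?M. LINT x|?M. f x * indicator {x..} t)"
    by (intro Bochner_Integration.integral_cong) (simp_all add: inner)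
  also have "\<dots> = (LINT x|?M. LINT t|?M. f x * indicator {x..} t)"
    using integrable_triangle_kernel[OF f] by (rule MM.Fubini_integral)
  also have "\<dots> = (LINT x|?M. (b - x) * f x)"
    by (intro Bochner_Integration.integral_cong) (simp_all add: measure_lebesgue_on_atLeastAtMost)
  also have "\<dots> = integral {a..b} (\<lambda>x. (b - x) * f x)"
    using f by (intro lebesgue_integral_eq_integral absolutely_integrable_imp_integrable
        absolutely_integrable_continuous_mult continuous_intros) auto
  finally show ?thesis .
qed

lemma has_integral_id_mult_by_parts:
  fixes w f :: "real \<Rightarrow> real"
  assumes "a \<le> b" and f: "f absolutely_integrable_on {a..b}"
    and w: "\<And>x. x \<in> {a..b} \<Longrightarrow> w x = w a + integral {a..x} f"
  shows "((\<lambda>x. x * f x) has_integral (b * w b - a * w a - integral {a..b} w)) {a..b}"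
proof -
  have f_int: "f integrable_on {a..b}"
    using f by (rule set_lebesgue_integral_eq_integral(1))
  have "(\<lambda>x. (b - x) * f x) integrable_on {a..b}"
    using f by (intro set_lebesgue_integral_eq_integral(1) absolutely_integrable_continuous_mult
        continuous_intros)
  then have "((\<lambda>x. b * f x - (b - x) * f x) has_integral
      b * integral {a..b} f - integral {a..b} (\<lambda>x. (b - x) * f x)) {a..b}"
    using f_int by (intro has_integral_diff has_integral_mult_right integrable_integral)
  moreover have "integral {a..b} w = integral {a..b} (\<lambda>t. w a + integral {a..t} f)"
    by (intro integral_cong w)
  then have "integral {a..b} w = (b - a) * w a + integral {a..b} (\<lambda>t. integral {a..t} f)"
    using \<open>a \<le> b\<close> integral_add[OF integrable_const_ivl
        integrable_continuous_real[OF indefinite_integral_continuous_1[OF f_int]]]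
    by simp
  ultimately show ?thesis
    using integral_indefinite_integral[OF f] w[of b] \<open>a \<le> b\<close>
    by (simp add: algebra_simps)
qed

lemma indefinite_integral_eq_0_imp_ae_0:
  fixes h :: "real \<Rightarrow> real"
  assumes h: "h integrable_on {a..b}" and zero: "\<And>x. x \<in> {a..b} \<Longrightarrow> integral {a..x} h = 0"
  shows "\<exists>N. negligible N \<and> (\<forall>x \<in> {a..b} - N. h x = 0)"
proof -
  define H where "H x = (if x \<in> {a..b} then h x else 0)" for x
  have "H integrable_on UNIV"
    unfolding H_def using h integrable_restrict_UNIV by blast
  then have "H integrable_on cbox u v" for u v :: real
    using integrable_on_subcbox by blast
  \<comment> \<open>Lebesgue differentiation: off a null set, averages of \<open>H\<close> over \<open>[x, x + t]\<close> tend to \<open>H x\<close>.\<close>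
  then obtain N where N: "negligible N" and lebesgue_point: "\<And>x e. \<lbrakk>x \<notin> N; 0 < e\<rbrakk> \<Longrightarrow>
      \<exists>d>0. \<forall>t. 0 < t \<and> t < d \<longrightarrow>
        norm (integral (cbox x (x + t *\<^sub>R One)) H /\<^sub>R t ^ DIM(real) - H x) < e"
    using integrable_ccontinuous_explicit[of H] by blast
  have "h x = 0" if x: "x \<in> {a..b}" "x \<notin> insert b N" for x
  proof (rule ccontr)
    assume hx: "h x \<noteq> 0"
    obtain d where "d > 0" and d: "\<And>t. 0 < t \<Longrightarrow> t < d \<Longrightarrow>
        norm (integral (cbox x (x + t *\<^sub>R One)) H /\<^sub>R t ^ DIM(real) - H x) < \<bar>h x\<bar>"
      using lebesgue_point[of x "\<bar>h x\<bar>"] x hx by auto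
    define t where "t = min (d / 2) (b - x)"
    have t: "0 < t" "t < d" "x + t \<le> b"
      using \<open>d > 0\<close> x by (auto simp: t_def)
    have "h integrable_on {a..x + t}"
      by (rule integrable_on_subinterval[OF h]) (use x t in auto)
    then have "integral {x..x + t} h = integral {a..x + t} h - integral {a..x} h"
      using Henstock_Kurzweil_Integration.integral_combine[of a x "x + t" h] x t by auto
    also have "\<dots> = 0"
      using zero[of "x + t"] zero[of x] x t by auto
    finally have "integral {x..x + t} h = 0" .
    moreover have "integral {x..x + t} H = integral {x..x + t} h"
      using x t by (intro integral_cong) (auto simp: H_def)
    ultimately have "integral {x..x + t} H = 0" by simp
    moreover have "\<bar>inverse t * integral {x..x + t} H - H x\<bar> < \<bar>h x\<bar>"
      using d[OF t(1,2)] by (simp add: cbox_interval)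
    ultimately show False
      using x by (simp add: H_def)
  qed
  then show ?thesis
    using N by (intro exI[of _ "insert b N"]) auto
qed

lemma indefinite_integrals_eq_iff_ae:
  fixes f g :: "real \<Rightarrow> real"
  assumes f: "f integrable_on {a..b}" and g: "g integrable_on {a..b}"
  shows "(\<forall>x \<in> {a..b}. integral {a..x} f = integral {a..x} g) \<longleftrightarrow>
         (\<exists>N. negligible N \<and> (\<forall>x \<in> {a..b} - N. f x = g x))"
proof
  assume eq: "\<forall>x \<in> {a..b}. integral {a..x} f = integral {a..x} g"
  have "(\<lambda>t. f t - g t) integrable_on {a..b}"
    using f g by (rule integrable_diff)
  moreover have "integral {a..x} (\<lambda>t. f t - g t) = 0" if "x \<in> {a..b}" for x
  proof -
    have "f integrable_on {a..x}" "g integrable_on {a..x}"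
      by (rule integrable_on_subinterval[OF f], use that in auto)
        (rule integrable_on_subinterval[OF g], use that in auto)
    then show ?thesis using eq that by (simp add: integral_diff)
  qed
  ultimately have "\<exists>N. negligible N \<and> (\<forall>x \<in> {a..b} - N. f x - g x = 0)"
    by (rule indefinite_integral_eq_0_imp_ae_0)
  then show "\<exists>N. negligible N \<and> (\<forall>x \<in> {a..b} - N. f x = g x)" by auto
next
  assume "\<exists>N. negligible N \<and> (\<forall>x \<in> {a..b} - N. f x = g x)"
  then obtain N where "negligible N" "\<forall>x \<in> {a..b} - N. f x = g x" by blast
  then show "\<forall>x \<in> {a..b}. integral {a..x} f = integral {a..x} g"
    by (auto intro!: integral_spike[of N])
qed

lemma nonneg_integral_eq_0_iff_ae:
  fixes f :: "real \<Rightarrow> real"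
  assumes f: "f integrable_on {a..b}" and nonneg: "\<And>x. x \<in> {a..b} \<Longrightarrow> 0 \<le> f x"
  shows "integral {a..b} f = 0 \<longleftrightarrow> (\<exists>N. negligible N \<and> (\<forall>x \<in> {a..b} - N. f x = 0))"
proof
  assume zero: "integral {a..b} f = 0"
  show "\<exists>N. negligible N \<and> (\<forall>x \<in> {a..b} - N. f x = 0)"
  proof (rule indefinite_integral_eq_0_imp_ae_0[OF f])
    fix x assume x: "x \<in> {a..b}"
    have "f integrable_on {a..x}" "f integrable_on {x..b}"
      by (rule integrable_on_subinterval[OF f], use x in auto)+
    then have "0 \<le> integral {a..x} f" "0 \<le> integral {x..b} f"
      using nonneg x by (auto intro!: integral_nonneg)
    moreover have "integral {a..x} f + integral {x..b} f = 0"
      using Henstock_Kurzweil_Integration.integral_combine[of a x b f] x f zero by auto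
    ultimately show "integral {a..x} f = 0" by linarith
  qed
next
  assume "\<exists>N. negligible N \<and> (\<forall>x \<in> {a..b} - N. f x = 0)"
  then obtain N where "negligible N" "\<forall>x \<in> {a..b} - N. f x = 0" by blast
  then have "integral {a..b} f = integral {a..b} (\<lambda>_. 0::real)"
    by (intro integral_spike[of N]) auto
  then show "integral {a..b} f = 0" by simp
qed

lemma square_less_square_of_abs_less:
  fixes x r :: real
  assumes "\<bar>x\<bar> < r"
  shows "x\<^sup>2 < r\<^sup>2"
  using power_strict_mono[of "\<bar>x\<bar>" r 2] assms by simp

lemma has_real_derivative_circle_arc:
  fixes r x :: real
  assumes "\<bar>x\<bar> < r"
  shows "((\<lambda>x. sqrt (r\<^sup>2 - x\<^sup>2)) has_real_derivative - x / sqrt (r\<^sup>2 - x\<^sup>2)) (at x)"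
proof -
  have "x\<^sup>2 < r\<^sup>2" using assms by (simp add: square_less_square_of_abs_less)
  then show ?thesis by (auto intro!: derivative_eq_intros simp: field_simps)
qed

lemma has_real_derivative_circle_segment_area:
  fixes r x :: real
  assumes "\<bar>x\<bar> < r"
  shows "((\<lambda>x. (x * sqrt (r\<^sup>2 - x\<^sup>2) + r\<^sup>2 * arcsin (x / r)) / 2)
           has_real_derivative sqrt (r\<^sup>2 - x\<^sup>2)) (at x)"
proof -
  let ?s = "sqrt (r\<^sup>2 - x\<^sup>2)"
  have r: "0 < r" and x: "x\<^sup>2 < r\<^sup>2"
    using assms by (auto simp: square_less_square_of_abs_less)
  have s: "0 < ?s" "?s\<^sup>2 = r\<^sup>2 - x\<^sup>2" using x by auto
  have "(x / r)\<^sup>2 < 1"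
    using x r by (simp add: power_divide)
  then have "(arcsin has_real_derivative inverse (sqrt (1 - (x / r)\<^sup>2))) (at (x / r))"
    by (intro DERIV_arcsin) (auto simp: power2_less_1_iff)
  moreover have "sqrt (1 - (x / r)\<^sup>2) = ?s / r"
    using r by (simp add: power_divide field_simps real_sqrt_divide)
  ultimately have "((\<lambda>x. arcsin (x / r)) has_real_derivative r / ?s * (1 / r)) (at x)"
    by (intro DERIV_chain2[where f = arcsin] DERIV_cdivide[OF DERIV_ident, where c = r, simplified]) simp
  from DERIV_cdivide[OF DERIV_add[OF DERIV_mult'[OF DERIV_ident has_real_derivative_circle_arc[OF assms]]
      DERIV_cmult[OF this, where c = "r\<^sup>2"]], where c = 2]
  show ?thesis
    by (rule DERIV_cong) (use s r in \<open>simp add: field_simps power2_eq_square\<close>)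
qed

lemma has_integral_circle_arc_slope:
  fixes r a y :: real
  assumes "- r < a" and "a \<le> y" and "y < r"
  shows "((\<lambda>x. - x / sqrt (r\<^sup>2 - x\<^sup>2)) has_integral sqrt (r\<^sup>2 - y\<^sup>2) - sqrt (r\<^sup>2 - a\<^sup>2)) {a..y}"
proof (rule fundamental_theorem_of_calculus[OF \<open>a \<le> y\<close>])
  fix x assume "x \<in> {a..y}"
  then have "\<bar>x\<bar> < r" using assms by auto
  then have "((\<lambda>x. sqrt (r\<^sup>2 - x\<^sup>2)) has_real_derivative - x / sqrt (r\<^sup>2 - x\<^sup>2)) (at x within {a..y})"
    by (rule has_field_derivative_at_within[OF has_real_derivative_circle_arc])
  then show "((\<lambda>x. sqrt (r\<^sup>2 - x\<^sup>2)) has_vector_derivative - x / sqrt (r\<^sup>2 - x\<^sup>2)) (at x within {a..y})"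
    by (simp only: has_real_derivative_iff_has_vector_derivative)
qed

lemma has_integral_circle_segment:
  fixes r p :: real
  assumes "0 \<le> p" and "p < r"
  shows "((\<lambda>x. sqrt (r\<^sup>2 - x\<^sup>2)) has_integral p * sqrt (r\<^sup>2 - p\<^sup>2) + r\<^sup>2 * arcsin (p / r)) {-p..p}"
proof -
  let ?G = "\<lambda>x. (x * sqrt (r\<^sup>2 - x\<^sup>2) + r\<^sup>2 * arcsin (x / r)) / 2"
  have "((\<lambda>x. sqrt (r\<^sup>2 - x\<^sup>2)) has_integral ?G p - ?G (- p)) {-p..p}"
  proof (rule fundamental_theorem_of_calculus)
    fix x assume "x \<in> {-p..p}"
    then have "\<bar>x\<bar> < r" using assms by auto
    then have "(?G has_real_derivative sqrt (r\<^sup>2 - x\<^sup>2)) (at x within {-p..p})"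
      by (rule has_field_derivative_at_within[OF has_real_derivative_circle_segment_area])
    then show "(?G has_vector_derivative sqrt (r\<^sup>2 - x\<^sup>2)) (at x within {-p..p})"
      by (simp only: has_real_derivative_iff_has_vector_derivative)
  qed (use assms in simp)
  moreover have "arcsin (- (p / r)) = - arcsin (p / r)"
    using assms by (intro arcsin_minus) (auto simp: divide_simps)
  then have "?G p - ?G (- p) = p * sqrt (r\<^sup>2 - p\<^sup>2) + r\<^sup>2 * arcsin (p / r)"
    by (simp add: divide_simps)
  ultimately show ?thesis by simp
qed

lemma circle_calibration_identity:
  fixes r x y :: real
  assumes "\<bar>x\<bar> \<le> r"
  shows "r\<^sup>2 * (1 + y\<^sup>2) - (sqrt (r\<^sup>2 - x\<^sup>2) - x * y)\<^sup>2 = (x + y * sqrt (r\<^sup>2 - x\<^sup>2))\<^sup>2"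
proof -
  have "(sqrt (r\<^sup>2 - x\<^sup>2))\<^sup>2 = r\<^sup>2 - x\<^sup>2"
    using assms abs_le_square_iff[of x r] by simp
  then show ?thesis by (simp add: power2_eq_square algebra_simps)
qed

lemma circle_calibration_le:
  fixes r x y :: real
  assumes "\<bar>x\<bar> \<le> r" and "0 < r"
  shows "(sqrt (r\<^sup>2 - x\<^sup>2) - x * y) / r \<le> sqrt (1 + y\<^sup>2)"
proof -
  have "(sqrt (r\<^sup>2 - x\<^sup>2) - x * y)\<^sup>2 \<le> r\<^sup>2 * (1 + y\<^sup>2)"
    using circle_calibration_identity[OF assms(1), of y] zero_le_power2[of "x + y * sqrt (r\<^sup>2 - x\<^sup>2)"]
    by linarith
  then have "sqrt (r\<^sup>2 - x\<^sup>2) - x * y \<le> sqrt (r\<^sup>2 * (1 + y\<^sup>2))"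
    by (rule real_le_rsqrt)
  also have "\<dots> = r * sqrt (1 + y\<^sup>2)"
    using assms(2) by (simp add: real_sqrt_mult)
  finally show ?thesis using assms(2) by (simp add: divide_le_eq mult.commute)
qed

lemma circle_calibration_eq_iff:
  fixes r x y :: real
  assumes "\<bar>x\<bar> < r"
  shows "(sqrt (r\<^sup>2 - x\<^sup>2) - x * y) / r = sqrt (1 + y\<^sup>2) \<longleftrightarrow> y = - x / sqrt (r\<^sup>2 - x\<^sup>2)"
proof -
  let ?s = "sqrt (r\<^sup>2 - x\<^sup>2)"
  have r: "0 < r" using assms by linarith
  have s: "0 < ?s" "?s\<^sup>2 = r\<^sup>2 - x\<^sup>2"
    using square_less_square_of_abs_less[OF assms] by auto
  show ?thesis
  proof
    assume "(?s - x * y) / r = sqrt (1 + y\<^sup>2)"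
    then have "(?s - x * y)\<^sup>2 = r\<^sup>2 * (1 + y\<^sup>2)"
      using r by (simp add: field_simps power_mult_distrib)
    then have "(x + y * ?s)\<^sup>2 = 0"
      using circle_calibration_identity[of x r y] assms by simp
    then show "y = - x / ?s" using s by (simp add: field_simps)
  next
    assume y: "y = - x / ?s"
    have "1 + y\<^sup>2 = (r / ?s)\<^sup>2"
      unfolding y using s by (simp add: field_simps power2_eq_square)
    moreover have "?s - x * y = r * (r / ?s)"
      unfolding y using s by (simp add: field_simps power2_eq_square)
    ultimately show "(?s - x * y) / r = sqrt (1 + y\<^sup>2)"
      using r s by simp
  qed
qed

lemma absolutely_integrable_sqrt_one_plus_square:
  fixes f :: "real \<Rightarrow> real"
  assumes f: "f absolutely_integrable_on {a..b}"
  shows "(\<lambda>x. sqrt (1 + (f x)\<^sup>2)) absolutely_integrable_on {a..b}"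
proof (rule measurable_bounded_by_integrable_imp_absolutely_integrable)
  have [measurable]: "f \<in> borel_measurable (lebesgue_on {a..b})"
    using f by (rule absolutely_integrable_imp_borel_measurable) simp
  show "(\<lambda>x. sqrt (1 + (f x)\<^sup>2)) \<in> borel_measurable (lebesgue_on {a..b})"
    by measurable
  show "(\<lambda>x. 1 + \<bar>f x\<bar>) integrable_on {a..b}"
    using f unfolding absolutely_integrable_on_def by (intro integrable_add integrable_const_ivl) simp
  show "norm (sqrt (1 + (f x)\<^sup>2)) \<le> 1 + \<bar>f x\<bar>" for x
    by (simp add: real_le_lsqrt power2_eq_square algebra_simps)
qed simp

lemma has_integral_circle_calibration:
  fixes w w' :: "real \<Rightarrow> real" and p r :: real
  assumes "0 < p" and "p < r" and W: "W11_with_deriv w w' p" and "w (-p) = 0" and "w p = 0"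
  shows "((\<lambda>x. (sqrt (r\<^sup>2 - x\<^sup>2) - x * w' x) / r) has_integral
           (integral {-p..p} w + p * sqrt (r\<^sup>2 - p\<^sup>2) + r\<^sup>2 * arcsin (p / r)) / r) {-p..p}"
proof -
  have w': "w' absolutely_integrable_on {-p..p}"
    and w: "\<And>x. x \<in> {-p..p} \<Longrightarrow> w x = w (-p) + integral {-p..x} w'"
    using W unfolding W11_with_deriv_def by blast+
  have "((\<lambda>x. x * w' x) has_integral p * w p - (- p) * w (- p) - integral {-p..p} w) {-p..p}"
    by (rule has_integral_id_mult_by_parts[OF _ w' w]) (use \<open>0 < p\<close> in simp)
  then have "((\<lambda>x. x * w' x) has_integral - integral {-p..p} w) {-p..p}"
    using \<open>w p = 0\<close> \<open>w (-p) = 0\<close> by simp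
  with has_integral_circle_segment[of p r] \<open>0 < p\<close> \<open>p < r\<close>
  have "((\<lambda>x. (sqrt (r\<^sup>2 - x\<^sup>2) - x * w' x) / r) has_integral
      (p * sqrt (r\<^sup>2 - p\<^sup>2) + r\<^sup>2 * arcsin (p / r) - - integral {-p..p} w) / r) {-p..p}"
    by (intro has_integral_divide has_integral_diff) simp_all
  then show ?thesis
    by (simp add: add_ac)
qed

lemma W11_eq_circle_arc_iff_ae:
  fixes w w' :: "real \<Rightarrow> real" and p r :: real
  assumes "0 < p" and "p < r" and W: "W11_with_deriv w w' p" and "w (-p) = 0"
  shows "(\<forall>x\<in>{-p..p}. w x = sqrt (r\<^sup>2 - x\<^sup>2) - sqrt (r\<^sup>2 - p\<^sup>2)) \<longleftrightarrow>
         (\<exists>N. negligible N \<and> (\<forall>x\<in>{-p..p} - N. w' x = - x / sqrt (r\<^sup>2 - x\<^sup>2)))"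
proof -
  let ?\<phi> = "\<lambda>x. - x / sqrt (r\<^sup>2 - x\<^sup>2)"
  have w'_int: "w' integrable_on {-p..p}"
    and w: "\<forall>x\<in>{-p..p}. w x = w (-p) + integral {-p..x} w'"
    using W set_lebesgue_integral_eq_integral(1) unfolding W11_with_deriv_def by blast+
  have \<phi>: "(?\<phi> has_integral sqrt (r\<^sup>2 - x\<^sup>2) - sqrt (r\<^sup>2 - p\<^sup>2)) {-p..x}" if "x \<in> {-p..p}" for x
    using has_integral_circle_arc_slope[of r "-p" x] that \<open>p < r\<close> by simp
  have "?\<phi> integrable_on {-p..p}"
    by (rule has_integral_integrable[OF \<phi>]) (use \<open>0 < p\<close> in simp)
  then have "(\<exists>N. negligible N \<and> (\<forall>x\<in>{-p..p} - N. w' x = ?\<phi> x)) \<longleftrightarrow>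
      (\<forall>x\<in>{-p..p}. integral {-p..x} w' = integral {-p..x} ?\<phi>)"
    by (rule indefinite_integrals_eq_iff_ae[OF w'_int, symmetric])
  also have "\<dots> \<longleftrightarrow> (\<forall>x\<in>{-p..p}. w x = sqrt (r\<^sup>2 - x\<^sup>2) - sqrt (r\<^sup>2 - p\<^sup>2))"
    using w integral_unique[OF \<phi>] \<open>w (-p) = 0\<close> by simp
  finally show ?thesis ..
qed

lemma length_integral_ge_circle_calibration:
  fixes w w' :: "real \<Rightarrow> real" and p r :: real
  assumes "0 < p" and "p < r" and W: "W11_with_deriv w w' p" and "w (-p) = 0" and "w p = 0"
  defines "L \<equiv> integral {-p..p} (\<lambda>x. sqrt (1 + (w' x)\<^sup>2))"
    and "B \<equiv> (integral {-p..p} w + p * sqrt (r\<^sup>2 - p\<^sup>2) + r\<^sup>2 * arcsin (p / r)) / r"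
  shows "B \<le> L \<and> (L = B \<longleftrightarrow> (\<forall>x\<in>{-p..p}. w x = sqrt (r\<^sup>2 - x\<^sup>2) - sqrt (r\<^sup>2 - p\<^sup>2)))"
proof -
  define len where "len x = sqrt (1 + (w' x)\<^sup>2)" for x
  define low where "low x = (sqrt (r\<^sup>2 - x\<^sup>2) - x * w' x) / r" for x
  have bounded: "\<bar>x\<bar> < r" if "x \<in> {-p..p}" for x
    using that \<open>p < r\<close> by auto
  have "r > 0" using assms by linarith
  have low: "(low has_integral B) {-p..p}"
    unfolding low_def B_def using has_integral_circle_calibration[OF assms(1-5)] .
  have len: "len integrable_on {-p..p}"
    using W absolutely_integrable_sqrt_one_plus_square set_lebesgue_integral_eq_integral(1)
    unfolding len_def W11_with_deriv_def by blast
  have D_int: "(\<lambda>x. len x - low x) integrable_on {-p..p}"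
    using len low by (intro integrable_diff) auto
  have D_integral: "integral {-p..p} (\<lambda>x. len x - low x) = L - B"
    using integral_diff[OF len has_integral_integrable[OF low]] integral_unique[OF low]
    by (simp add: L_def len_def[abs_def])
  have D_nonneg: "0 \<le> len x - low x" if "x \<in> {-p..p}" for x
    using circle_calibration_le[of x r "w' x"] bounded[OF that] \<open>r > 0\<close>
    by (simp add: len_def low_def)
  have D_zero_iff: "len x = low x \<longleftrightarrow> w' x = - x / sqrt (r\<^sup>2 - x\<^sup>2)" if "x \<in> {-p..p}" for x
    using circle_calibration_eq_iff[OF bounded[OF that], of "w' x"] by (auto simp: len_def low_def)
  have "B \<le> L"
    using integral_nonneg[OF D_int D_nonneg] D_integral by simp
  moreover have "L = B \<longleftrightarrow> (\<exists>N. negligible N \<and> (\<forall>x\<in>{-p..p} - N. len x - low x = 0))"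
    using nonneg_integral_eq_0_iff_ae[OF D_int D_nonneg] D_integral by simp
  moreover have "\<dots> \<longleftrightarrow> (\<exists>N. negligible N \<and> (\<forall>x\<in>{-p..p} - N. w' x = - x / sqrt (r\<^sup>2 - x\<^sup>2)))"
    by (intro ex_cong1 conj_cong refl ball_cong) (simp_all add: D_zero_iff)
  ultimately show ?thesis
    using W11_eq_circle_arc_iff_ae[OF assms(1-4)] by simp
qed

lemma arccos_minus_mult_sqrt_pos:
  fixes \<beta> :: real
  assumes "0 < \<beta>" and "\<beta> < 1"
  shows "0 < arccos \<beta> - \<beta> * sqrt (1 - \<beta>\<^sup>2)"
proof -
  have "sqrt (1 - \<beta>\<^sup>2) = sin (arccos \<beta>)"
    using assms by (simp add: sin_arccos)
  also have "\<dots> \<le> arccos \<beta>"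
    using assms by (intro sin_x_le_x arccos_lbound) auto
  finally have "sqrt (1 - \<beta>\<^sup>2) \<le> arccos \<beta>" .
  moreover have "0 < sqrt (1 - \<beta>\<^sup>2)"
    using assms by (simp add: power2_less_1_iff)
  ultimately show ?thesis
    using assms mult_strict_right_mono[of \<beta> 1 "sqrt (1 - \<beta>\<^sup>2)"] by linarith
qed

lemma half_chord_arccos:
  fixes \<beta> p r :: real
  assumes "0 < \<beta>" and "\<beta> < 1" and "0 < r" and p: "p = r * sqrt (1 - \<beta>\<^sup>2)"
  shows "p < r" and "sqrt (r\<^sup>2 - p\<^sup>2) = \<beta> * r" and "arcsin (p / r) = arccos \<beta>"
proof -
  have "0 < \<beta>\<^sup>2" "\<beta>\<^sup>2 < 1"
    using assms(1,2) by (auto simp: power2_less_1_iff)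
  then have s: "0 \<le> sqrt (1 - \<beta>\<^sup>2)" "sqrt (1 - \<beta>\<^sup>2) < 1" "(sqrt (1 - \<beta>\<^sup>2))\<^sup>2 = 1 - \<beta>\<^sup>2"
    by auto
  show "p < r"
    using s(2) \<open>0 < r\<close> unfolding p by simp
  have "r\<^sup>2 - p\<^sup>2 = r\<^sup>2 * (1 - (sqrt (1 - \<beta>\<^sup>2))\<^sup>2)"
    unfolding p by (simp add: power_mult_distrib right_diff_distrib)
  also have "\<dots> = (\<beta> * r)\<^sup>2"
    using s(3) by (simp add: power_mult_distrib)
  finally have "r\<^sup>2 - p\<^sup>2 = (\<beta> * r)\<^sup>2" .
  then show "sqrt (r\<^sup>2 - p\<^sup>2) = \<beta> * r"
    using assms(1,3) by simp
  show "arcsin (p / r) = arccos \<beta>"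
    unfolding p using assms by (simp add: arccos_arcsin_sqrt_pos)
qed

lemma sum_reciprocal_ge_two_sqrt:
  fixes A c r :: real
  assumes "0 < A" and "0 < c" and "0 < r"
  shows "2 * sqrt (A * c) \<le> A / r + r * c \<and> (A / r + r * c = 2 * sqrt (A * c) \<longleftrightarrow> r = sqrt (A / c))"
proof -
  have "sqrt (A / r) * sqrt (r * c) = sqrt (A * c)"
    using assms by (simp add: real_sqrt_mult[symmetric])
  then have sum: "A / r + r * c = 2 * sqrt (A * c) + (sqrt (A / r) - sqrt (r * c))\<^sup>2"
    using assms by (simp add: power2_diff)
  have "sqrt (A / r) = sqrt (r * c) \<longleftrightarrow> r\<^sup>2 = A / c"
    using assms by (auto simp: field_simps power2_eq_square)
  also have "\<dots> \<longleftrightarrow> r = sqrt (A / c)"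
    using assms(3) real_sqrt_unique[of r "A / c"] by auto
  finally show ?thesis
    unfolding sum by simp
qed

theorem mainTheorem4:
  fixes \<beta> A p :: real and w w' :: "real \<Rightarrow> real"
  assumes "0 < \<beta>" and "\<beta> < 1" and "A > 0" and "p > 0"
    and "W11_with_deriv w w' p"
    and "\<forall>x\<in>{-p..p}. w x \<ge> 0"
    and "w (-p) = 0" and "w p = 0"
    and "integral {-p..p} w = A"
  defines "L \<equiv> integral {-p..p} (\<lambda>x. sqrt (1 + (w' x)\<^sup>2))"
    and "c \<equiv> arccos \<beta> - \<beta> * sqrt (1 - \<beta>\<^sup>2)"
  defines "p0 \<equiv> sqrt ((1 - \<beta>\<^sup>2) * A / c)"
    and "R \<equiv> sqrt (A / c)"
  shows "L - 2 * \<beta> * p \<ge> 2 * sqrt (A * c) \<and>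
         (L - 2 * \<beta> * p = 2 * sqrt (A * c) \<longleftrightarrow>
            p = p0 \<and> (\<forall>x\<in>{-p..p}. w x = sqrt (R\<^sup>2 - x\<^sup>2) - \<beta> * R))"
proof -
  define s where "s = sqrt (1 - \<beta>\<^sup>2)"
  define r where "r = p / s"
  have "0 < s" using assms(1,2) by (simp add: s_def power2_less_1_iff)
  then have "0 < r" and p: "p = r * s" using \<open>p > 0\<close> by (simp_all add: r_def)
  note chord = half_chord_arccos[OF assms(1,2) \<open>0 < r\<close> p[unfolded s_def]]
  have "0 < c" unfolding c_def using assms(1,2) by (rule arccos_minus_mult_sqrt_pos)
  have "(A + p * sqrt (r\<^sup>2 - p\<^sup>2) + r\<^sup>2 * arcsin (p / r)) / r - 2 * \<beta> * p = A / r + r * c"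
    using chord(2,3) \<open>0 < r\<close> unfolding c_def p s_def by (simp add: field_simps power2_eq_square)
  with length_integral_ge_circle_calibration[OF \<open>p > 0\<close> chord(1) assms(5,7,8)]
  have calibration: "A / r + r * c \<le> L - 2 * \<beta> * p \<and>
      (L - 2 * \<beta> * p = A / r + r * c \<longleftrightarrow> (\<forall>x\<in>{-p..p}. w x = sqrt (r\<^sup>2 - x\<^sup>2) - \<beta> * r))"
    unfolding assms(9) chord(2) L_def[symmetric] by linarith
  have "p0 = s * R"
    unfolding p0_def R_def s_def by (simp add: real_sqrt_mult[symmetric])
  then have "p = p0 \<longleftrightarrow> r = R"
    using \<open>0 < s\<close> by (simp add: p)
  then show ?thesis
    using calibration sum_reciprocal_ge_two_sqrt[OF assms(3) \<open>0 < c\<close> \<open>0 < r\<close>]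
    unfolding R_def by auto
qed

end
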